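(* If $X$ is a regular set star Hurewicz space, then every closed discrete subspace of $X$ has cardinality less than $\mathfrak c$. Hence $e(X)\leq\mathfrak c$.
   Context: For a family $\mathcal U$ of subsets of $X$ and $A\subseteq X$, $st(A,\mathcal U)=\bigcup\{U\in\mathcal U: U\cap A\neq\emptyset\}$. $X$ is set star Hurewicz if for every nonempty $A\subseteq X$ and every sequence $(\mathcal U_n:n\in\omega)$ of families of open subsets with $\overline A\subseteq\bigcup\mathcal U_n$ for all $n$, there are finite $\mathcal V_n\subseteq\mathcal U_n$ such that every $x\in A$ belongs to $st(\bigcup\mathcal V_n,\mathcal U_n)$ for all but finitely many $n$. $e(X)$ is the supremum of cardinalities of closed discrete subsets; $\mathfrak c=2^{\aleph_0}$. *)

theory Defs
  imports "HOL-Analysis.Analysis" "HOL-Library.Equipollence"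
begin

definition star :: "'a set \<Rightarrow> 'a set set \<Rightarrow> 'a set" where
  "star A \<U> = \<Union>{U \<in> \<U>. U \<inter> A \<noteq> {}}"

definition set_star_Hurewicz :: "'a topology \<Rightarrow> bool" where
  "set_star_Hurewicz X \<longleftrightarrow>
     (\<forall>A \<U>. A \<noteq> {} \<and> A \<subseteq> topspace X \<and>
            (\<forall>n. (\<forall>U \<in> \<U> n. openin X U) \<and> X closure_of A \<subseteq> \<Union>(\<U> n)) \<longrightarrow>
        (\<exists>\<V> :: nat \<Rightarrow> 'a set set.
            (\<forall>n. finite (\<V> n) \<and> \<V> n \<subseteq> \<U> n) \<and>
            (\<forall>x \<in> A. \<forall>\<^sub>F n in sequentially. x \<in> star (\<Union>(\<V> n)) (\<U> n))))"

end

theory Submission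
  imports Defs
begin

text \<open>If a closed discrete set \<open>D\<close> had continuum many points, we could index points \<open>\<psi> t\<close>
  of \<open>D\<close> injectively by the sets \<open>t \<subseteq> \<nat>\<close>, and read each \<open>t\<close> as a code for a sequence of finite
  sets \<open>G\<^sub>n(t)\<close> of indices, such that every sequence of finite sets has uncountably many codes.
  Regularity gives open sets \<open>W\<^sub>n(t) \<ni> \<psi> t\<close> disjoint from \<open>W\<^sub>n(e)\<close> for all \<open>e \<in> G\<^sub>n(t) - {t}\<close>.
  The set star Hurewicz property, applied to the closed set of all \<open>\<psi> t\<close> and the covers
  \<open>{W\<^sub>n(t)}\<^sub>t\<close>, selects finite sets \<open>F\<^sub>n\<close> of indices. A code \<open>t\<close> of \<open>(F\<^sub>n)\<close> outside the
  countable set \<open>\<Union>\<^sub>n F\<^sub>n\<close> has \<open>W\<^sub>n(t)\<close> disjoint from every selected \<open>W\<^sub>n(e)\<close>, so \<open>\<psi> t\<close> lies in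
  none of the stars.\<close>

lemma lepoll_total: "A \<lesssim> B \<or> B \<lesssim> A"
  using ordLeq_total[OF card_of_Well_order card_of_Well_order, of A B]
  unfolding lepoll_def card_of_ordLeq[symmetric] by blast

lemma not_lesspoll_imp_lepoll: "\<not> A \<prec> B \<Longrightarrow> B \<lesssim> A"
  using lepoll_total eqpoll_imp_lepoll eqpoll_sym unfolding lesspoll_def by blast

text \<open>A code \<open>t \<subseteq> \<nat>\<close> is read through the injection \<open>code_slot\<close>: the slots \<open>Inr (Inl (n, k))\<close>
  count the sets at stage \<open>n\<close>, and the slots \<open>Inr (Inr (n, k, m))\<close> list the members \<open>m\<close> of the
  \<open>k\<close>-th of them. The \<open>Inl\<close> slots are free; they make the codes of a fixed sequence uncountable.\<close>
definition code_slot :: "nat + nat \<times> nat + nat \<times> nat \<times> nat \<Rightarrow> nat" where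
  "code_slot = to_nat"

definition coded_sets :: "nat \<Rightarrow> nat set \<Rightarrow> nat set set" where
  "coded_sets n t = (\<lambda>k. {m. code_slot (Inr (Inr (n, k, m))) \<in> t})
     ` {..< card {k. code_slot (Inr (Inl (n, k))) \<in> t}}"

definition code :: "nat set \<Rightarrow> (nat \<Rightarrow> nat set list) \<Rightarrow> nat set" where
  "code S xs = code_slot ` (Inl ` S \<union> Inr ` Inl ` {(n, k). k < length (xs n)}
     \<union> Inr ` Inr ` {(n, k, m). k < length (xs n) \<and> m \<in> xs n ! k})"

lemma code_slot_in_code_iff:
  "code_slot z \<in> code S xs \<longleftrightarrow> z \<in> Inl ` S \<union> Inr ` Inl ` {(n, k). k < length (xs n)}
     \<union> Inr ` Inr ` {(n, k, m). k < length (xs n) \<and> m \<in> xs n ! k}"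
  unfolding code_def code_slot_def by (simp add: inj_image_mem_iff)

lemma finite_coded_sets: "finite (coded_sets n t)"
  by (simp add: coded_sets_def)

lemma coded_sets_code: "coded_sets n (code S xs) = set (xs n)"
proof -
  have "{k. code_slot (Inr (Inl (n, k))) \<in> code S xs} = {..< length (xs n)}"
    by (auto simp: code_slot_in_code_iff)
  then show ?thesis
    by (auto simp: coded_sets_def code_slot_in_code_iff set_conv_nth)
qed

lemma inj_code: "inj (\<lambda>S. code S xs)"
proof (rule injI)
  fix S S' assume "code S xs = code S' xs"
  then have "{j. code_slot (Inl j) \<in> code S xs} = {j. code_slot (Inl j) \<in> code S' xs}" by simp
  then show "S = S'" by (auto simp: code_slot_in_code_iff)
qed

lemma uncountable_codes:
  assumes "\<And>n. finite (F n)"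
  shows "uncountable {t. \<forall>n. coded_sets n t = F n}"
proof
  assume countable: "countable {t. \<forall>n. coded_sets n t = F n}"
  obtain xs where xs: "\<And>n. set (xs n) = F n"
    using finite_list[OF assms] by metis
  have "range (\<lambda>S. code S xs) \<subseteq> {t. \<forall>n. coded_sets n t = F n}"
    by (auto simp: coded_sets_code xs)
  then have "countable (UNIV :: nat set set)"
    using countable countable_subset countable_image_inj_on[OF _ inj_code] by metis
  then show False
    using countable_eqpoll[OF _ eqpoll_sym[OF nat_sets_eqpoll_reals]] uncountable_UNIV_real by blast
qed

lemma set_star_HurewiczD:
  assumes "set_star_Hurewicz X" "A \<noteq> {}" "A \<subseteq> topspace X"
    and "\<And>n. \<forall>U \<in> \<U> n. openin X U" "\<And>n. X closure_of A \<subseteq> \<Union>(\<U> n)"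
  obtains \<V> where "\<And>n. finite (\<V> n)" "\<And>n. \<V> n \<subseteq> \<U> n"
    "\<And>x. x \<in> A \<Longrightarrow> \<forall>\<^sub>F n in sequentially. x \<in> star (\<Union>(\<V> n)) (\<U> n)"
proof -
  have "\<exists>\<V>. (\<forall>n. finite (\<V> n) \<and> \<V> n \<subseteq> \<U> n) \<and>
      (\<forall>x \<in> A. \<forall>\<^sub>F n in sequentially. x \<in> star (\<Union>(\<V> n)) (\<U> n))"
    by (rule assms(1)[unfolded set_star_Hurewicz_def, rule_format]) (use assms(2-5) in blast)
  then show thesis
    using that by blast
qed

lemma closed_discrete_point_separation:
  assumes "regular_space X" "closedin X D" "subtopology X D = discrete_topology D" "x \<in> D"
  shows "\<exists>U V. openin X U \<and> openin X V \<and> x \<in> U \<and> D - {x} \<subseteq> V \<and> disjnt U V"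
proof -
  have "closedin X (D - {x})"
    using closedin_trans_full[of X D "D - {x}"] assms(2,3) by simp
  moreover have "x \<in> topspace X - (D - {x})"
    using assms(2,4) closedin_subset by blast
  ultimately show ?thesis
    using assms(1) unfolding regular_space_def by blast
qed

lemma closed_discrete_separating_nbhds:
  fixes \<psi> :: "'b \<Rightarrow> 'a" and G :: "'i \<Rightarrow> 'b \<Rightarrow> 'b set"
  assumes "regular_space X" "closedin X D" "subtopology X D = discrete_topology D"
    and "inj \<psi>" "range \<psi> \<subseteq> D" "\<And>i t. finite (G i t)"
  obtains W where "\<And>i t. openin X (W i t)" "\<And>i t. \<psi> t \<in> W i t"
    "\<And>i s t. \<psi> s \<in> W i t \<Longrightarrow> s = t"
    "\<And>i t e. e \<in> G i t \<Longrightarrow> e \<noteq> t \<Longrightarrow> disjnt (W i t) (W i e)"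
proof -
  have "\<exists>U V. openin X U \<and> openin X V \<and> \<psi> t \<in> U \<and> D - {\<psi> t} \<subseteq> V \<and> disjnt U V" for t
    using closed_discrete_point_separation[OF assms(1-3)] assms(5) by blast
  then obtain U V where U_open: "\<And>t. openin X (U t)" and V_open: "\<And>t. openin X (V t)"
    and U_mem: "\<And>t. \<psi> t \<in> U t" and V_sup: "\<And>t. D - {\<psi> t} \<subseteq> V t"
    and UV_disjnt: "\<And>t. disjnt (U t) (V t)"
    by metis
  have \<psi>_in_V: "\<psi> s \<in> V t" if "s \<noteq> t" for s t
  proof -
    have "\<psi> s \<in> D - {\<psi> t}"
      using assms(4,5) that by (auto dest: injD)
    then show ?thesis
      using V_sup by blast
  qed
  define W where "W i t = U t \<inter> (\<Inter>e \<in> G i t - {t}. V e)" for i t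
  show thesis
  proof
    fix i t
    show "openin X (W i t)"
    proof (cases "G i t - {t} = {}")
      case True
      then show ?thesis
        unfolding W_def True by (simp add: U_open)
    next
      case False
      then show ?thesis
        unfolding W_def using assms(6) U_open V_open by (intro openin_Int openin_INT2) auto
    qed
    have "\<psi> t \<in> V e" if "e \<in> G i t - {t}" for e
      using \<psi>_in_V[of t e] that by blast
    then show "\<psi> t \<in> W i t"
      unfolding W_def using U_mem by blast
  next
    fix i s t assume "\<psi> s \<in> W i t"
    then have "\<psi> s \<in> U t"
      by (simp add: W_def)
    then show "s = t"
      using \<psi>_in_V UV_disjnt by (meson disjnt_iff)
  next
    fix i t e assume "e \<in> G i t" "e \<noteq> t"
    then have "W i t \<subseteq> V e" "W i e \<subseteq> U e"
      unfolding W_def by auto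
    then show "disjnt (W i t) (W i e)"
      using UV_disjnt[of e] by (meson disjnt_subset1 disjnt_subset2 disjnt_sym)
  qed
qed

lemma set_star_Hurewicz_closed_discrete_escape:
  fixes \<psi> :: "'b \<Rightarrow> 'a" and G :: "nat \<Rightarrow> 'b \<Rightarrow> 'b set"
  assumes "regular_space X" "set_star_Hurewicz X"
    and "closedin X D" "subtopology X D = discrete_topology D"
    and "inj \<psi>" "range \<psi> \<subseteq> D" "\<And>n t. finite (G n t)"
  obtains F where "\<And>n. finite (F n)"
    "\<And>t. \<forall>\<^sub>F n in sequentially. t \<in> F n \<or> \<not> F n \<subseteq> G n t"
proof -
  obtain W where W_open: "\<And>n t. openin X (W n t)" and W_mem: "\<And>n t. \<psi> t \<in> W n t"
    and W_unique: "\<And>n s t. \<psi> s \<in> W n t \<Longrightarrow> s = t"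
    and W_disjnt: "\<And>n t e. e \<in> G n t \<Longrightarrow> e \<noteq> t \<Longrightarrow> disjnt (W n t) (W n e)"
    by (rule closed_discrete_separating_nbhds[OF assms(1,3-7)]) (rule that)
  have "closedin X (range \<psi>)"
    using closedin_trans_full[of X D "range \<psi>"] assms(3,4,6) by simp
  then have cover: "X closure_of range \<psi> \<subseteq> \<Union>(range (W n))" for n
    using W_mem by (auto simp: closure_of_closedin)
  have \<psi>_range: "range \<psi> \<noteq> {}" "range \<psi> \<subseteq> topspace X"
    using assms(3,6) closedin_subset by auto
  have W_range_open: "\<forall>U \<in> range (W n). openin X U" for n
    using W_open by blast
  obtain \<V> where \<V>_finite: "\<And>n. finite (\<V> n)" and \<V>_sub: "\<And>n. \<V> n \<subseteq> range (W n)"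
    and \<V>_star: "\<And>x. x \<in> range \<psi> \<Longrightarrow> \<forall>\<^sub>F n in sequentially. x \<in> star (\<Union>(\<V> n)) (range (W n))"
    by (rule set_star_HurewiczD[where \<U> = "\<lambda>n. range (W n)", OF assms(2) \<psi>_range W_range_open cover])
      (rule that)
  define F where "F n = W n -` \<V> n" for n
  have escape: "t \<in> F n \<or> \<not> F n \<subseteq> G n t"
    if in_star: "\<psi> t \<in> star (\<Union>(\<V> n)) (range (W n))" for n t
  proof -
    obtain s where s: "\<psi> t \<in> W n s" "W n s \<inter> \<Union>(\<V> n) \<noteq> {}"
      using in_star unfolding star_def by blast
    from s(1) have "t = s"
      by (rule W_unique)
    with s(2) obtain V where V: "V \<in> \<V> n" "W n t \<inter> V \<noteq> {}"
      by blast
    then obtain e where "V = W n e"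
      using \<V>_sub by blast
    with V have "e \<in> F n" "\<not> disjnt (W n t) (W n e)"
      by (auto simp: F_def disjnt_def)
    then show ?thesis
      using W_disjnt by blast
  qed
  show thesis
  proof (rule that)
    fix n
    have "inj (W n)"
      using W_mem W_unique by (metis injI)
    then show "finite (F n)"
      unfolding F_def using \<V>_finite by (intro finite_vimageI)
  next
    fix t
    have "\<forall>\<^sub>F n in sequentially. \<psi> t \<in> star (\<Union>(\<V> n)) (range (W n))"
      by (rule \<V>_star[OF rangeI])
    then show "\<forall>\<^sub>F n in sequentially. t \<in> F n \<or> \<not> F n \<subseteq> G n t"
      by (rule eventually_mono) (rule escape)
  qed
qed

theorem theorem4p2:
  fixes X :: "'a topology" and D :: "'a set"
  assumes "regular_space X" and "set_star_Hurewicz X"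
    and "closedin X D" and "subtopology X D = discrete_topology D"
  shows "D \<prec> (UNIV :: real set)"
proof (rule ccontr)
  assume "\<not> D \<prec> (UNIV :: real set)"
  then have "(UNIV :: nat set set) \<lesssim> D"
    using not_lesspoll_imp_lepoll nat_sets_eqpoll_reals lepoll_trans1 by blast
  then obtain \<psi> :: "nat set \<Rightarrow> 'a" where "inj \<psi>" "range \<psi> \<subseteq> D"
    unfolding lepoll_def by blast
  then obtain F where F_finite: "\<And>n. finite (F n)"
    and F_escape: "\<And>t. \<forall>\<^sub>F n in sequentially. t \<in> F n \<or> \<not> F n \<subseteq> coded_sets n t"
    using set_star_Hurewicz_closed_discrete_escape[OF assms] finite_coded_sets by metis
  have "countable (\<Union>n. F n)"
    using F_finite by (simp add: countable_finite)
  then have "\<not> {t. \<forall>n. coded_sets n t = F n} \<subseteq> (\<Union>n. F n)"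
    using uncountable_codes[OF F_finite] by (meson countable_subset)
  then obtain t where "t \<notin> (\<Union>n. F n)" "\<forall>n. coded_sets n t = F n"
    by blast
  with F_escape[of t] show False
    by simp
qed

end
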